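(* Let $(\mathcal{S}_1,\mathcal{S}_2)$ be an $S$-pair. Then there is at most one element $s \in S$ such that either $S - s \in \mathcal{S}_2$ or $\{t\} \in \mathcal{S}_2$ for every $t \in S - s$.
   Context: Let $S$ be a finite nonempty set and $\mathcal{S}_1, \mathcal{S}_2 \subseteq 2^S$. The pair $(\mathcal{S}_1,\mathcal{S}_2)$ is an $S$-pair if: (S1) for $i=1,2$, if $A,B \in \mathcal{S}_i$ with $B \subset A$ and $|A| = |B|+1$, then every $|B|$-element subset of $A$ lies in $\mathcal{S}_i$; (S2) for $i=1,2$, if $A,B \in \mathcal{S}_i$ with $|A|=|B|$ and $|A\cap B| = |A|-1$, then $A\cup B \in \mathcal{S}_i$; (S3) for $i=1,2$, not every singleton $\{s\}$, $s\in S$, lies in $\mathcal{S}_i$, and $S \notin \mathcal{S}_i$; (S4) for $k = 1,\dots,|S|-1$ and $x\in S$, if every $k$-element subset of $S - x$ lies in $\mathcal{S}_1$, then not every $(|S|-k)$-element subset of $S-x$ lies in $\mathcal{S}_2$. *)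

theory Defs
  imports Main
begin

definition S_axioms :: "'a set \<Rightarrow> 'a set set \<Rightarrow> bool" where
  "S_axioms S F \<longleftrightarrow>
     F \<subseteq> Pow S \<and>
     \<comment> \<open>(S1)\<close>
     (\<forall>A\<in>F. \<forall>B\<in>F. B \<subset> A \<and> card A = card B + 1 \<longrightarrow>
        (\<forall>C. C \<subseteq> A \<and> card C = card B \<longrightarrow> C \<in> F)) \<and>
     \<comment> \<open>(S2)\<close>
     (\<forall>A\<in>F. \<forall>B\<in>F. card A = card B \<and> card (A \<inter> B) + 1 = card A \<longrightarrow> A \<union> B \<in> F) \<and>
     \<comment> \<open>(S3)\<close>
     \<not> (\<forall>s\<in>S. {s} \<in> F) \<and> S \<notin> F"

definition S_pair :: "'a set \<Rightarrow> 'a set set \<Rightarrow> 'a set set \<Rightarrow> bool" where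
  "S_pair S F1 F2 \<longleftrightarrow>
     finite S \<and> S \<noteq> {} \<and>
     S_axioms S F1 \<and> S_axioms S F2 \<and>
     \<comment> \<open>(S4)\<close>
     (\<forall>k\<in>{1..card S - 1}. \<forall>x\<in>S.
        (\<forall>B. B \<subseteq> S - {x} \<and> card B = k \<longrightarrow> B \<in> F1) \<longrightarrow>
        \<not> (\<forall>B. B \<subseteq> S - {x} \<and> card B = card S - k \<longrightarrow> B \<in> F2))"

end

theory Submission
  imports Defs
begin

text \<open>Only (S2) and (S3) for \<open>\<S>\<^sub>2\<close> are needed. By (S2), two sets \<open>C \<union> {a}\<close>, \<open>C \<union> {b}\<close>
  of \<open>\<S>\<^sub>2\<close> always give \<open>C \<union> {a, b} \<in> \<S>\<^sub>2\<close>; hence if all singletons of \<open>S - s\<close> lie in \<open>\<S>\<^sub>2\<close>,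
  then so does every nonempty subset of \<open>S - s\<close>, in particular \<open>S - s\<close> itself. So both
  alternatives put \<open>S - s\<close> into \<open>\<S>\<^sub>2\<close>, and two distinct such points \<open>s, s'\<close> would put
  \<open>(S - s) \<union> (S - s') = S\<close> into \<open>\<S>\<^sub>2\<close>, contradicting (S3).\<close>

definition near_union_closed :: "'a set set \<Rightarrow> bool" where
  "near_union_closed F \<longleftrightarrow>
     (\<forall>A\<in>F. \<forall>B\<in>F. card A = card B \<and> card (A \<inter> B) + 1 = card A \<longrightarrow> A \<union> B \<in> F)"

lemma S_axioms_near_union_closed: "S_axioms S F \<Longrightarrow> near_union_closed F"
  unfolding S_axioms_def near_union_closed_def by blast

lemma near_union_closed_insert2:
  assumes "near_union_closed F" and "finite C"
    and "a \<notin> C" and "b \<notin> C" and "a \<noteq> b"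
    and "insert a C \<in> F" and "insert b C \<in> F"
  shows "insert a (insert b C) \<in> F"
proof -
  have "card (insert a C) = card (insert b C)" and "card (insert a C \<inter> insert b C) + 1 = card (insert a C)"
    using assms(2-5) by (simp_all add: Int_insert_left Int_insert_right)
  then have "insert a C \<union> insert b C \<in> F"
    using assms(1,6,7) unfolding near_union_closed_def by blast
  then show ?thesis by (simp add: insert_commute)
qed

lemma near_union_closed_nonempty_subset:
  assumes F: "near_union_closed F" and "finite T" and singletons: "\<forall>t\<in>T. {t} \<in> F"
  shows "A \<subseteq> T \<Longrightarrow> A \<noteq> {} \<Longrightarrow> A \<in> F"
proof (induction "card A" arbitrary: A rule: less_induct)
  case less
  have "finite A" using less.prems(1) \<open>finite T\<close> by (rule finite_subset)
  obtain a where a: "a \<in> A" using less.prems(2) by blast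
  show ?case
  proof (cases "A = {a}")
    case True
    then show ?thesis using singletons less.prems(1) by blast
  next
    case False
    then obtain b where b: "b \<in> A" "b \<noteq> a" using a by blast
    define C where "C = A - {a, b}"
    have A_eq: "A = insert a (insert b C)" using a b unfolding C_def by blast
    have "finite C" "a \<notin> C" "b \<notin> C" using \<open>finite A\<close> unfolding C_def by auto
    have smaller: "card (insert x C) < card A" if "x \<in> {a, b}" for x
      using that b(2) \<open>finite C\<close> \<open>a \<notin> C\<close> \<open>b \<notin> C\<close> unfolding A_eq by auto
    have "insert x C \<in> F" if "x \<in> {a, b}" for x
    proof (rule less.hyps[OF smaller[OF that]])
      show "insert x C \<subseteq> T" using that less.prems(1) unfolding A_eq by blast
    qed simp
    then have "insert a (insert b C) \<in> F"
      using near_union_closed_insert2[OF F \<open>finite C\<close> \<open>a \<notin> C\<close> \<open>b \<notin> C\<close>] b(2) by blast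
    then show ?thesis unfolding A_eq .
  qed
qed

lemma S_pair_co_point_mem:
  assumes "S_pair S F1 F2" and "s' \<in> S" and "s' \<noteq> s"
    and "S - {s} \<in> F2 \<or> (\<forall>t\<in>S - {s}. {t} \<in> F2)"
  shows "S - {s} \<in> F2"
proof -
  have "finite S" and "near_union_closed F2"
    using assms(1) S_axioms_near_union_closed unfolding S_pair_def by auto
  then show ?thesis
    using assms(2-4) near_union_closed_nonempty_subset[of F2 "S - {s}" "S - {s}"] by blast
qed

theorem mainTheorem8:
  fixes S :: "'a set" and F1 F2 :: "'a set set"
  assumes "S_pair S F1 F2"
  shows "\<forall>s\<in>S. \<forall>s'\<in>S.
           (S - {s} \<in> F2 \<or> (\<forall>t\<in>S - {s}. {t} \<in> F2)) \<and>
           (S - {s'} \<in> F2 \<or> (\<forall>t\<in>S - {s'}. {t} \<in> F2)) \<longrightarrow> s = s'"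
proof (intro ballI impI; rule ccontr)
  fix s s'
  assume s: "s \<in> S" and s': "s' \<in> S" and "s \<noteq> s'"
    and h: "(S - {s} \<in> F2 \<or> (\<forall>t\<in>S - {s}. {t} \<in> F2)) \<and>
            (S - {s'} \<in> F2 \<or> (\<forall>t\<in>S - {s'}. {t} \<in> F2))"
  have "finite S" and F2: "near_union_closed F2" and "S \<notin> F2"
    using assms S_axioms_near_union_closed unfolding S_pair_def S_axioms_def by auto
  define C where "C = S - {s, s'}"
  have "S - {s} = insert s' C" and "S - {s'} = insert s C"
    using s s' \<open>s \<noteq> s'\<close> unfolding C_def by auto
  then have "insert s' C \<in> F2" and "insert s C \<in> F2"
    using S_pair_co_point_mem[OF assms] s s' h \<open>s \<noteq> s'\<close> by metis+
  then have "insert s (insert s' C) \<in> F2"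
    using near_union_closed_insert2[OF F2] \<open>finite S\<close> \<open>s \<noteq> s'\<close> unfolding C_def by simp
  moreover have "insert s (insert s' C) = S" using s s' unfolding C_def by blast
  ultimately show False using \<open>S \<notin> F2\<close> by simp
qed

end
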